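(* Let $H$ be a reduced double-well type potential and $\beta>0$. Then \begin{enumerate} \item $F_\beta^0(\lambda_\beta)F_\beta^1(\lambda_\beta)=1$; \item $\Phi_\beta(01)=F_\beta^1(\lambda_\beta)\Phi_\beta(10)$ and $\Phi_\beta(10)=F_\beta^0(\lambda_\beta)\Phi_\beta(01)$; \item $\nu_\beta[01]=F_\beta^0(\lambda_\beta)\nu_\beta[10]$ and $\nu_\beta[10]=F_\beta^1(\lambda_\beta)\nu_\beta[01]$. \end{enumerate}
   Context: $\Sigma:=\{0,1\}^{\mathbb N}$, $\sigma$ the left shift. A reduced double-well type potential is a continuous nonnegative $H:\Sigma\to\mathbb R$ with summable variation such that $H=0$ on $[00]\cup[11]$, $H=H_n^0>0$ on $[01^n0]$, $H=H_n^1>0$ on $[10^n1]$ ($n\ge1$), and $\sum_{k\ge1}\sup_{n\ge0}|H_k^i-H_{k+n}^i|<\infty$ ($i=0,1$). $\mathcal L_\beta[\Phi](x)=e^{-\beta H(0x)}\Phi(0x)+e^{-\beta H(1x)}\Phi(1x)$; $\Phi_\beta$ the unique positive continuous eigenfunction with $\max\Phi_\beta=1$, $\lambda_\beta$ its eigenvalue, $\nu_\beta$ the unique probability with $\mathcal L_\beta^*\nu_\beta=\lambda_\beta\nu_\beta$. $\Phi_\beta$ is constant on $[01]$ and $[10]$; $\Phi_\beta(01),\Phi_\beta(10)$ denote these values. $F_\beta^i(\lambda):=\sum_{k\ge1}\lambda^{-k}e^{-\beta H_k^i}$ for $i=0,1$. *)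

theory Defs
  imports "HOL-Probability.Probability"
begin

text \<open>The full shift \<open>\<Sigma> = {0,1}^\<nat>\<close> is the type \<open>nat \<Rightarrow> bool\<close>
  (symbol 0 = False, symbol 1 = True) carrying the product topology
  (library instance, bool is discrete).\<close>

type_synonym seq = "nat \<Rightarrow> bool"

definition cyl :: "bool list \<Rightarrow> seq set" where
  "cyl w = {x. \<forall>i<length w. x i = w ! i}"

definition scons :: "bool \<Rightarrow> seq \<Rightarrow> seq" where
  "scons a x = case_nat a x"

definition var :: "(seq \<Rightarrow> real) \<Rightarrow> nat \<Rightarrow> real" where
  "var H n = Sup {\<bar>H x - H y\<bar> | x y. \<forall>i<n. x i = y i}"

definition summable_variation :: "(seq \<Rightarrow> real) \<Rightarrow> bool" where
  "summable_variation H \<longleftrightarrow> summable (\<lambda>n. var H (Suc n))"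

definition reduced_double_well ::
    "(seq \<Rightarrow> real) \<Rightarrow> (nat \<Rightarrow> real) \<Rightarrow> (nat \<Rightarrow> real) \<Rightarrow> bool" where
  "reduced_double_well H H0 H1 \<longleftrightarrow>
     continuous_on UNIV H \<and> (\<forall>x. 0 \<le> H x) \<and> summable_variation H \<and>
     (\<forall>x \<in> cyl [False, False] \<union> cyl [True, True]. H x = 0) \<and>
     (\<forall>n\<ge>1. H0 n > 0 \<and> (\<forall>x \<in> cyl ([False] @ replicate n True @ [False]). H x = H0 n)) \<and>
     (\<forall>n\<ge>1. H1 n > 0 \<and> (\<forall>x \<in> cyl ([True] @ replicate n False @ [True]). H x = H1 n)) \<and>
     summable (\<lambda>k. SUP n. \<bar>H0 (Suc k) - H0 (Suc k + n)\<bar>) \<and>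
     summable (\<lambda>k. SUP n. \<bar>H1 (Suc k) - H1 (Suc k + n)\<bar>)"

definition transfer :: "(seq \<Rightarrow> real) \<Rightarrow> real \<Rightarrow> (seq \<Rightarrow> real) \<Rightarrow> seq \<Rightarrow> real" where
  "transfer H \<beta> \<Phi> x =
     exp (- \<beta> * H (scons False x)) * \<Phi> (scons False x)
   + exp (- \<beta> * H (scons True x)) * \<Phi> (scons True x)"

definition Fterm :: "(nat \<Rightarrow> real) \<Rightarrow> real \<Rightarrow> real \<Rightarrow> nat \<Rightarrow> real" where
  "Fterm Hi \<beta> lam k = inverse (lam ^ Suc k) * exp (- \<beta> * Hi (Suc k))"

definition F :: "(nat \<Rightarrow> real) \<Rightarrow> real \<Rightarrow> real \<Rightarrow> real" where
  "F Hi \<beta> lam = (\<Sum>k. Fterm Hi \<beta> lam k)"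

definition is_eigenfunction :: "(seq \<Rightarrow> real) \<Rightarrow> real \<Rightarrow> (seq \<Rightarrow> real) \<Rightarrow> real \<Rightarrow> bool" where
  "is_eigenfunction H \<beta> \<Phi> lam \<longleftrightarrow>
     continuous_on UNIV \<Phi> \<and> (\<forall>x. \<Phi> x > 0) \<and> (\<forall>x. \<Phi> x \<le> 1) \<and> (\<exists>x. \<Phi> x = 1) \<and>
     (\<forall>x. transfer H \<beta> \<Phi> x = lam * \<Phi> x)"

text \<open>\<nu> is a Borel probability on \<Sigma> with \<open>\<L>^*\<nu> = \<lambda>\<nu>\<close>, i.e. \<open>\<nu>(\<L> f) = \<lambda> \<nu>(f)\<close> for all continuous f.\<close>
definition is_eigenmeasure :: "(seq \<Rightarrow> real) \<Rightarrow> real \<Rightarrow> seq measure \<Rightarrow> real \<Rightarrow> bool" where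
  "is_eigenmeasure H \<beta> \<nu> lam \<longleftrightarrow>
     prob_space \<nu> \<and> sets \<nu> = sets borel \<and>
     (\<forall>f. continuous_on UNIV f \<longrightarrow>
        integral\<^sup>L \<nu> (transfer H \<beta> f) = lam * integral\<^sup>L \<nu> f)"

end

(*
  Unfolding the eigenvalue equation along an orbit that stays in one well writes \<Phi> on [10]
  as a weighted sum, with weights the terms of F\<^sup>0(\<lambda>), of its values at the excursions
  0 1\<^sup>j y \<in> [01], and symmetrically \<Phi> on [01] as an F\<^sup>1-weighted sum of values on [10].
  Comparing the maxima and the minima of \<Phi> on the two cylinders gives F\<^sup>0 F\<^sup>1 = 1; then the
  maximum of \<Phi> on [01] propagates along excursions to every point obtained from a maximiser
  by prepending a word, a dense subset of [01], so \<Phi> is constant on [01] and on [10].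
  The same unfolding of \<L>\<^sup>* \<nu> = \<lambda> \<nu> shows that [01] is, up to the \<nu>-null point 01\<^sup>\<infinity>,
  the disjoint union of the cylinders [0 1\<^sup>j\<^sup>+\<^sup>1 0], each a copy of [10] scaled by a term of F\<^sup>0(\<lambda>).
*)

theory Submission
  imports Defs
begin

lemma LIMSEQ_dominated_by_power:
  fixes a :: "nat \<Rightarrow> real"
  assumes "\<And>n. 0 \<le> a n" "\<And>n. a n \<le> C / lam ^ n" "1 < lam"
  shows "a \<longlonglongrightarrow> 0"
proof (rule tendsto_sandwich[of "\<lambda>_. 0" _ _ "\<lambda>n. C / lam ^ n"])
  have "(\<lambda>n. C * inverse (lam ^ n)) \<longlonglongrightarrow> C * 0"
    using \<open>1 < lam\<close> by (intro tendsto_mult tendsto_const LIMSEQ_inverse_realpow_zero)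
  then show "(\<lambda>n. C / lam ^ n) \<longlonglongrightarrow> 0"
    by (simp add: divide_inverse)
qed (use assms in auto)

lemma sums_weighted_le:
  fixes f g :: "nat \<Rightarrow> real"
  assumes "\<And>k. 0 \<le> f k" "summable f" "(\<lambda>k. f k * g k) sums s" "\<And>k. g k \<le> c"
  shows "s \<le> suminf f * c"
proof (rule sums_le[OF _ assms(3)])
  show "(\<lambda>k. f k * c) sums (suminf f * c)"
    using assms(2) by (intro sums_mult2 summable_sums)
qed (use assms in \<open>simp add: mult_left_mono\<close>)

lemma sums_weighted_ge:
  fixes f g :: "nat \<Rightarrow> real"
  assumes "\<And>k. 0 \<le> f k" "summable f" "(\<lambda>k. f k * g k) sums s" "\<And>k. c \<le> g k"
  shows "suminf f * c \<le> s"
proof (rule sums_le[OF _ _ assms(3)])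
  show "(\<lambda>k. f k * c) sums (suminf f * c)"
    using assms(2) by (intro sums_mult2 summable_sums)
qed (use assms in \<open>simp add: mult_left_mono\<close>)

lemma sums_weighted_eq_bound:
  fixes f g :: "nat \<Rightarrow> real"
  assumes f_pos: "\<And>k. 0 < f k" and "summable f" "(\<lambda>k. f k * g k) sums (suminf f * c)" "\<And>k. g k \<le> c"
  shows "g k = c"
proof (rule ccontr)
  assume "g k \<noteq> c"
  with assms(4)[of k] f_pos[of k] have pos: "0 < f k * (c - g k)"
    by simp
  have sums0: "(\<lambda>k. f k * (c - g k)) sums 0"
    using sums_diff[OF sums_mult2[OF summable_sums[OF assms(2)], of c] assms(3)]
    by (simp add: algebra_simps)
  have "0 < suminf (\<lambda>k. f k * (c - g k))"
    using assms(4) f_pos by (intro suminf_pos2[OF sums_summable[OF sums0] _ pos]) (simp add: less_imp_le)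
  with sums_unique[OF sums0] show False
    by simp
qed

section \<open>Cylinders of the full shift\<close>

lemma scons_0 [simp]: "scons a x 0 = a"
  and scons_Suc [simp]: "scons a x (Suc i) = x i"
  by (simp_all add: scons_def)

fun prepend :: "bool list \<Rightarrow> seq \<Rightarrow> seq" where
  "prepend [] x = x"
| "prepend (c # w) x = scons c (prepend w x)"

lemma prepend_nth: "prepend w x i = (if i < length w then w ! i else x (i - length w))"
  by (induction w arbitrary: i) (auto simp: nth_Cons' scons_def split: nat.split)

lemma mem_cyl_iff: "x \<in> cyl w \<longleftrightarrow> (\<forall>i<length w. x i = w ! i)"
  by (simp add: cyl_def)

lemma cyl_Nil [simp]: "cyl [] = UNIV"
  by (simp add: cyl_def)

lemma scons_in_cyl_Cons [simp]: "scons c x \<in> cyl (d # w) \<longleftrightarrow> c = d \<and> x \<in> cyl w"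
  unfolding mem_cyl_iff by (auto simp: less_Suc_eq_0_disj)

lemma prepend_in_cyl_append [simp]: "prepend u x \<in> cyl (u @ w) \<longleftrightarrow> x \<in> cyl w"
  by (induction u) auto

lemma hd_in_cyl_Cons: "x \<in> cyl (a # w) \<Longrightarrow> x 0 = a"
  unfolding mem_cyl_iff by auto

lemma cyl_singleton_iff [simp]: "x \<in> cyl [a] \<longleftrightarrow> x 0 = a"
  by (simp add: mem_cyl_iff)

lemma cyl_snoc: "cyl (w @ [a]) = {x \<in> cyl w. x (length w) = a}"
  unfolding mem_cyl_iff set_eq_iff by (auto simp: nth_append less_Suc_eq)

lemma cyl_nonempty: "cyl w \<noteq> {}"
  using prepend_in_cyl_append[of w "\<lambda>_. False" "[]"] by auto

definition excursion :: "bool \<Rightarrow> nat \<Rightarrow> seq \<Rightarrow> seq" where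
  "excursion b j y = scons b (prepend (replicate j (\<not> b)) y)"

lemma excursion_mem: "y \<in> cyl [\<not> b, b] \<Longrightarrow> excursion b j y \<in> cyl [b, \<not> b]"
  using hd_in_cyl_Cons[of y "\<not> b"]
  by (cases j) (auto simp: excursion_def mem_cyl_iff prepend_nth less_Suc_eq)

lemma compact_UNIV_seq: "compact (UNIV :: seq set)"
proof -
  have "compact_space (product_topology (\<lambda>i::nat. euclidean :: bool topology) UNIV)"
    unfolding compact_space_product_topology by (simp add: compact_space_def finite_imp_compact)
  then show ?thesis
    unfolding euclidean_product_topology compact_space_def by simp
qed

lemma clopen_cyl: "open (cyl w)" "closed (cyl w)"
proof -
  have "cyl w = (\<Inter>i<length w. (\<lambda>x. x i) -` {w ! i})"
    unfolding cyl_def by auto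
  moreover have "open ((\<lambda>x::seq. x i) -` S)" for i S
    using continuous_on_open_vimage[of UNIV "\<lambda>x::seq. x i"] discrete_topology_class.open_discrete[of S] by simp
  ultimately show "open (cyl w)" "closed (cyl w)"
    by (auto simp: closed_def vimage_Compl[symmetric])
qed

lemma compact_cyl: "compact (cyl w)"
  using closed_Int_compact[OF clopen_cyl(2) compact_UNIV_seq] by simp

lemma continuous_indicator_cyl: "continuous_on UNIV (indicator (cyl w) :: seq \<Rightarrow> real)"
proof -
  have "indicator (cyl w) -` B = (if 1 \<in> B then cyl w else {}) \<union> (if 0 \<in> B then - cyl w else {})"
    for B :: "real set"
    by (auto simp: indicator_def of_bool_def split: if_splits)
  then show ?thesis
    unfolding continuous_on_open_vimage[OF open_UNIV]
    using clopen_cyl[of w] by (auto simp: closed_def)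
qed

lemma LIMSEQ_prepend_prefix: "(\<lambda>n. prepend (map u [0..<n]) x) \<longlonglongrightarrow> u"
proof -
  have "\<forall>\<^sub>F n in sequentially. prepend (map u [0..<n]) x i = u i" for i
    using eventually_ge_at_top[of "Suc i"] by eventually_elim (simp add: prepend_nth del: upt_Suc)
  then have "limitin (product_topology (\<lambda>i. euclidean) UNIV) (\<lambda>n. prepend (map u [0..<n]) x) u sequentially"
    unfolding limitin_componentwise by (simp add: tendsto_discrete)
  then show ?thesis
    unfolding euclidean_product_topology by simp
qed

lemma closed_prepend_stable_eq_cyl:
  assumes "closed P" "P \<subseteq> cyl v" "x \<in> P"
    and stable: "\<And>w. prepend w x \<in> cyl v \<Longrightarrow> prepend w x \<in> P"
  shows "P = cyl v"
proof
  show "cyl v \<subseteq> P"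
  proof
    fix u assume u: "u \<in> cyl v"
    have "\<forall>\<^sub>F n in sequentially. prepend (map u [0..<n]) x \<in> P"
      using eventually_ge_at_top[of "length v"]
    proof eventually_elim
      case (elim n)
      with u have "prepend (map u [0..<n]) x \<in> cyl v"
        by (auto simp: mem_cyl_iff prepend_nth simp del: upt_Suc)
      then show ?case by (rule stable)
    qed
    with \<open>closed P\<close> show "u \<in> P"
      by (rule Lim_in_closed_set) (simp_all add: LIMSEQ_prepend_prefix)
  qed
qed (use assms in auto)

lemma prepend_decomposition:
  assumes PQ: "\<And>x k. x \<in> P \<Longrightarrow> excursion True k x \<in> Q"
    and QP: "\<And>y j. y \<in> Q \<Longrightarrow> excursion False j y \<in> P"
    and "x \<in> P"
  shows "(\<exists>k x'. x' \<in> P \<and> prepend w x = prepend (replicate k False) x') \<or>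
         (\<exists>k y'. y' \<in> Q \<and> prepend w x = prepend (replicate k True) y')"
proof (induction w)
  case Nil
  show ?case using \<open>x \<in> P\<close> by (intro disjI1 exI[of _ 0]) auto
next
  case (Cons c w)
  from Cons.IH show ?case
  proof (elim disjE exE conjE)
    fix k x' assume x': "x' \<in> P" "prepend w x = prepend (replicate k False) x'"
    show ?thesis
    proof (cases c)
      case True
      then have "prepend (c # w) x = prepend (replicate 0 True) (excursion True k x')"
        using x' by (simp add: excursion_def)
      then show ?thesis using PQ[OF x'(1)] by blast
    next
      case False
      then have "prepend (c # w) x = prepend (replicate (Suc k) False) x'"
        using x' by simp
      then show ?thesis using x' by blast
    qed
  next
    fix k y' assume y': "y' \<in> Q" "prepend w x = prepend (replicate k True) y'"
    show ?thesis
    proof (cases c)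
      case False
      then have "prepend (c # w) x = prepend (replicate 0 False) (excursion False k y')"
        using y' by (simp add: excursion_def)
      then show ?thesis using QP[OF y'(1)] by blast
    next
      case True
      then have "prepend (c # w) x = prepend (replicate (Suc k) True) y'"
        using y' by simp
      then show ?thesis using y' by blast
    qed
  qed
qed

lemma prepend_mem_stable_pair:
  assumes P: "P \<subseteq> cyl [False, True]" and Q: "Q \<subseteq> cyl [True, False]"
    and PQ: "\<And>x k. x \<in> P \<Longrightarrow> excursion True k x \<in> Q"
    and QP: "\<And>y j. y \<in> Q \<Longrightarrow> excursion False j y \<in> P"
    and "x \<in> P" and w: "prepend w x \<in> cyl [False, True]"
  shows "prepend w x \<in> P"
proof -
  have w01: "prepend w x 0 = False" "prepend w x 1 = True"
    using w by (auto simp: mem_cyl_iff)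
  have "(\<exists>k x'. x' \<in> P \<and> prepend w x = prepend (replicate k False) x') \<or>
        (\<exists>k y'. y' \<in> Q \<and> prepend w x = prepend (replicate k True) y')"
    using PQ QP \<open>x \<in> P\<close> by (rule prepend_decomposition)
  then show ?thesis
  proof (elim disjE exE conjE)
    fix k x' assume x': "x' \<in> P" "prepend w x = prepend (replicate k False) x'"
    have "x' 0 = False" using P x' by (auto simp: mem_cyl_iff)
    with w01 x' have "k = 0" by (auto simp: prepend_nth split: if_splits)
    with x' show ?thesis by simp
  next
    fix k y' assume y': "y' \<in> Q" "prepend w x = prepend (replicate k True) y'"
    have "y' 0 = True" using Q y' by (auto simp: mem_cyl_iff)
    with w01 y' show ?thesis by (auto simp: prepend_nth split: if_splits)
  qed
qed

section \<open>A single well\<close>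

locale well =
  fixes H :: "seq \<Rightarrow> real" and Hb :: "nat \<Rightarrow> real" and b :: bool and \<beta> lam :: real
  assumes H_nonneg: "\<And>x. 0 \<le> H x"
    and H_constant: "\<And>c x. x \<in> cyl [c, c] \<Longrightarrow> H x = 0"
    and H_excursion: "\<And>n x. n \<ge> 1 \<Longrightarrow> x \<in> cyl (b # replicate n (\<not> b) @ [b]) \<Longrightarrow> H x = Hb n"
    and beta_pos: "\<beta> > 0"
    and lam_gt_1: "lam > 1"
begin

lemma Hb_nonneg: "n \<ge> 1 \<Longrightarrow> 0 \<le> Hb n"
proof -
  assume "n \<ge> 1"
  obtain x where "x \<in> cyl (b # replicate n (\<not> b) @ [b])"
    using cyl_nonempty by blast
  with \<open>n \<ge> 1\<close> show ?thesis
    using H_excursion H_nonneg by metis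
qed

lemma Fterm_pos: "Fterm Hb \<beta> lam k > 0"
  using lam_gt_1 by (simp add: Fterm_def)

lemma summable_Fterm: "summable (Fterm Hb \<beta> lam)"
proof (rule summable_comparison_test')
  show "summable (\<lambda>k. inverse lam ^ Suc k)"
    using lam_gt_1 by (simp add: summable_geometric summable_mult inverse_less_1_iff)
  fix k
  have "exp (- \<beta> * Hb (Suc k)) \<le> 1"
    using beta_pos Hb_nonneg[of "Suc k"] by simp
  then show "norm (Fterm Hb \<beta> lam k) \<le> inverse lam ^ Suc k"
    using lam_gt_1 by (simp add: Fterm_def power_inverse mult_left_le)
qed

end

locale well_eigenfunction = well +
  fixes \<Phi> :: "seq \<Rightarrow> real"
  assumes eigen: "\<And>x. transfer H \<beta> \<Phi> x = lam * \<Phi> x"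
    and \<Phi>_pos: "\<And>x. \<Phi> x > 0"
    and \<Phi>_le_1: "\<And>x. \<Phi> x \<le> 1"
begin

lemma eigen_excursion_step:
  assumes "y \<in> cyl [\<not> b, b]"
  shows "lam * \<Phi> (prepend (replicate j (\<not> b)) y) =
    exp (- \<beta> * Hb (Suc j)) * \<Phi> (excursion b j y) + \<Phi> (prepend (replicate (Suc j) (\<not> b)) y)"
proof -
  define z where "z = prepend (replicate j (\<not> b)) y"
  have "z \<in> cyl (replicate j (\<not> b) @ [\<not> b, b])"
    using assms by (simp add: z_def)
  moreover have "replicate j (\<not> b) @ [\<not> b, b] = (\<not> b) # replicate j (\<not> b) @ [b]"
    by (induction j) simp_all
  ultimately have z: "z \<in> cyl ((\<not> b) # replicate j (\<not> b) @ [b])"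
    by simp
  have "H (scons b z) = Hb (Suc j)"
    using z by (intro H_excursion) simp_all
  moreover have "H (scons (\<not> b) z) = 0"
    using hd_in_cyl_Cons[OF z] by (intro H_constant) simp
  ultimately show ?thesis
    using eigen[of z] by (cases b) (simp_all add: transfer_def excursion_def z_def)
qed

text \<open>Unfolding the eigenvalue equation along the orbit that stays in the well of \<open>\<not> b\<close>.\<close>
lemma sums_excursions:
  assumes y: "y \<in> cyl [\<not> b, b]"
  shows "(\<lambda>j. Fterm Hb \<beta> lam j * \<Phi> (excursion b j y)) sums \<Phi> y"
proof -
  define z where "z j = prepend (replicate j (\<not> b)) y" for j
  have partial: "(\<Sum>j<N. Fterm Hb \<beta> lam j * \<Phi> (excursion b j y)) = \<Phi> y - \<Phi> (z N) / lam ^ N" for N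
  proof (induction N)
    case (Suc N)
    have "\<Phi> (z N) / lam ^ N = lam * \<Phi> (z N) / lam ^ Suc N"
      using lam_gt_1 by simp
    also have "\<dots> = (exp (- \<beta> * Hb (Suc N)) * \<Phi> (excursion b N y) + \<Phi> (z (Suc N))) / lam ^ Suc N"
      using eigen_excursion_step[OF y, of N] by (simp add: z_def)
    also have "\<dots> = Fterm Hb \<beta> lam N * \<Phi> (excursion b N y) + \<Phi> (z (Suc N)) / lam ^ Suc N"
      by (simp add: Fterm_def divide_inverse algebra_simps)
    finally show ?case
      using Suc by simp
  qed (simp add: z_def)
  have "(\<lambda>N. \<Phi> (z N) / lam ^ N) \<longlonglongrightarrow> 0"
  proof (rule LIMSEQ_dominated_by_power[OF _ _ lam_gt_1])
    fix N
    show "0 \<le> \<Phi> (z N) / lam ^ N" "\<Phi> (z N) / lam ^ N \<le> 1 / lam ^ N"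
      using \<Phi>_pos[of "z N"] \<Phi>_le_1[of "z N"] lam_gt_1 by (simp_all add: divide_right_mono)
  qed
  then have "(\<lambda>N. \<Phi> y - \<Phi> (z N) / lam ^ N) \<longlonglongrightarrow> \<Phi> y"
    using tendsto_diff[OF tendsto_const] by fastforce
  then show ?thesis
    unfolding sums_def partial .
qed

end

locale well_eigenmeasure = well +
  fixes \<nu> :: "seq measure"
  assumes prob: "prob_space \<nu>"
    and sets_\<nu>: "sets \<nu> = sets borel"
    and eigen_measure:
      "\<And>f. continuous_on UNIV f \<Longrightarrow> integral\<^sup>L \<nu> (transfer H \<beta> f) = lam * integral\<^sup>L \<nu> f"
begin

sublocale prob_space \<nu>
  by (rule prob)

abbreviation \<mu> :: "bool list \<Rightarrow> real" where
  "\<mu> w \<equiv> measure \<nu> (cyl w)"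

lemma space_\<nu>: "space \<nu> = UNIV"
  using sets_eq_imp_space_eq[OF sets_\<nu>] by simp

lemma cyl_in_sets: "cyl w \<in> sets \<nu>"
  using clopen_cyl(1)[of w] by (simp add: sets_\<nu>)

lemma measure_cyl_split: "\<mu> w = \<mu> (w @ [a]) + \<mu> (w @ [\<not> a])"
proof -
  have "cyl w = cyl (w @ [a]) \<union> cyl (w @ [\<not> a])" "cyl (w @ [a]) \<inter> cyl (w @ [\<not> a]) = {}"
    by (auto simp: cyl_snoc)
  then show ?thesis
    using finite_measure_Union[OF cyl_in_sets cyl_in_sets] by simp
qed

lemma eigen_measure_cyl_Cons:
  "lam * \<mu> (d # v) = integral\<^sup>L \<nu> (\<lambda>x. exp (- \<beta> * H (scons d x)) * indicator (cyl v) x)"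
proof -
  have "transfer H \<beta> (indicator (cyl (d # v))) = (\<lambda>x. exp (- \<beta> * H (scons d x)) * indicator (cyl v) x)"
    by (cases d) (auto simp: transfer_def indicator_def)
  then show ?thesis
    using eigen_measure[OF continuous_indicator_cyl, of "d # v"] by (simp add: space_\<nu>)
qed

lemma measure_cyl_Cons_le: "\<mu> (d # v) \<le> \<mu> v"
proof -
  let ?f = "\<lambda>x. exp (- \<beta> * H (scons d x)) * indicator (cyl v) x :: real"
  have le: "?f x \<le> indicator (cyl v) x" for x
    using beta_pos H_nonneg[of "scons d x"] by (simp add: indicator_def)
  have ind: "integrable \<nu> (indicator (cyl v) :: seq \<Rightarrow> real)"
    by (intro integrable_real_indicator cyl_in_sets) (simp add: less_top[symmetric])
  have "integral\<^sup>L \<nu> ?f \<le> integral\<^sup>L \<nu> (indicator (cyl v))"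
  proof (cases "integrable \<nu> ?f")
    case True
    show ?thesis
      using integral_mono[OF True ind le] .
  qed (simp add: not_integrable_integral_eq)
  then have "lam * \<mu> (d # v) \<le> \<mu> v"
    by (simp add: eigen_measure_cyl_Cons space_\<nu>)
  moreover have "1 * \<mu> (d # v) \<le> lam * \<mu> (d # v)"
    using lam_gt_1 by (intro mult_right_mono) simp_all
  ultimately show ?thesis
    by simp
qed

lemma measure_cyl_Cons_Cons: "lam * \<mu> (c # c # v) = \<mu> (c # v)"
proof -
  have "(\<lambda>x. exp (- \<beta> * H (scons c x)) * indicator (cyl (c # v)) x) = (indicator (cyl (c # v)) :: seq \<Rightarrow> real)"
  proof
    fix x
    have "x \<in> cyl (c # v) \<Longrightarrow> H (scons c x) = 0"
      using H_constant[of "scons c x" c] by (simp add: hd_in_cyl_Cons)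
    then show "exp (- \<beta> * H (scons c x)) * indicator (cyl (c # v)) x = (indicator (cyl (c # v)) x :: real)"
      by (simp add: indicator_def)
  qed
  then show ?thesis
    by (simp add: eigen_measure_cyl_Cons space_\<nu>)
qed

lemma measure_cyl_replicate: "\<mu> (c # replicate j c @ v) = \<mu> (c # v) / lam ^ j"
proof (induction j)
  case (Suc j)
  have "\<mu> (c # replicate (Suc j) c @ v) = \<mu> (c # replicate j c @ v) / lam"
    using measure_cyl_Cons_Cons[of c "replicate j c @ v"] lam_gt_1 by (simp add: field_simps)
  with Suc show ?case
    by simp
qed simp

lemma measure_excursion: "\<mu> (b # replicate (Suc j) (\<not> b) @ [b]) = Fterm Hb \<beta> lam j * \<mu> [\<not> b, b]"
proof -
  let ?v = "replicate (Suc j) (\<not> b) @ [b]"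
  have "(\<lambda>x. exp (- \<beta> * H (scons b x)) * indicator (cyl ?v) x) = (\<lambda>x. exp (- \<beta> * Hb (Suc j)) * (indicator (cyl ?v) x :: real))"
    using H_excursion[of "Suc j"] by (auto simp: indicator_def simp del: replicate_Suc)
  then have "lam * \<mu> (b # ?v) = exp (- \<beta> * Hb (Suc j)) * \<mu> ?v"
    by (simp add: eigen_measure_cyl_Cons space_\<nu> del: replicate_Suc)
  moreover have "\<mu> ?v = \<mu> [\<not> b, b] / lam ^ j"
    using measure_cyl_replicate[of "\<not> b" j "[b]"] by simp
  ultimately show ?thesis
    using lam_gt_1 by (simp add: Fterm_def field_simps del: replicate_Suc)
qed

lemma measure_excursions_partial:
  "\<mu> [b, \<not> b] = (\<Sum>j<N. \<mu> (b # replicate (Suc j) (\<not> b) @ [b])) + \<mu> (b # replicate (Suc N) (\<not> b))"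
proof (induction N)
  case (Suc N)
  have "\<mu> (b # replicate (Suc N) (\<not> b)) =
      \<mu> (b # replicate (Suc N) (\<not> b) @ [b]) + \<mu> (b # replicate (Suc (Suc N)) (\<not> b))"
    using measure_cyl_split[of "b # replicate (Suc N) (\<not> b)" b] by (simp add: replicate_append_same)
  with Suc show ?case
    by simp
qed simp

text \<open>The cylinder \<open>[b (\<not> b)]\<close> decomposes into the excursion cylinders \<open>[b (\<not> b)\<^sup>j\<^sup>+\<^sup>1 b]\<close>,
  each of which is a scaled copy of \<open>[(\<not> b) b]\<close>.\<close>
lemma measure_balance: "\<mu> [b, \<not> b] = F Hb \<beta> lam * \<mu> [\<not> b, b]"
proof -
  have "(\<lambda>N. \<mu> (b # replicate (Suc N) (\<not> b))) \<longlonglongrightarrow> 0"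
  proof (rule LIMSEQ_dominated_by_power[OF _ _ lam_gt_1])
    fix N
    have "\<mu> (b # replicate (Suc N) (\<not> b)) \<le> \<mu> ((\<not> b) # replicate N (\<not> b) @ [])"
      using measure_cyl_Cons_le[of b "replicate (Suc N) (\<not> b)"] by simp
    also have "\<dots> \<le> 1 / lam ^ N"
      using measure_cyl_replicate[of "\<not> b" N "[]"] lam_gt_1 by (simp add: divide_right_mono)
    finally show "\<mu> (b # replicate (Suc N) (\<not> b)) \<le> 1 / lam ^ N" .
  qed simp
  then have "(\<lambda>N. \<mu> [b, \<not> b] - \<mu> (b # replicate (Suc N) (\<not> b))) \<longlonglongrightarrow> \<mu> [b, \<not> b]"
    using tendsto_diff[OF tendsto_const] by fastforce
  moreover have "(\<Sum>j<N. Fterm Hb \<beta> lam j * \<mu> [\<not> b, b]) = \<mu> [b, \<not> b] - \<mu> (b # replicate (Suc N) (\<not> b))" for N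
    using measure_excursions_partial[of N] by (simp add: measure_excursion del: replicate_Suc)
  ultimately have "(\<lambda>j. Fterm Hb \<beta> lam j * \<mu> [\<not> b, b]) sums \<mu> [b, \<not> b]"
    unfolding sums_def by simp
  moreover have "(\<lambda>j. Fterm Hb \<beta> lam j * \<mu> [\<not> b, b]) sums (F Hb \<beta> lam * \<mu> [\<not> b, b])"
    unfolding F_def by (intro sums_mult2 summable_sums summable_Fterm)
  ultimately show ?thesis
    by (rule sums_unique2)
qed

end

section \<open>Two coupled renewal equations\<close>

text \<open>Abstracts the two instances \<open>b = False\<close>, \<open>b = True\<close> of \<open>sums_excursions\<close>.\<close>
locale renewal_pair =
  fixes \<Phi> :: "seq \<Rightarrow> real" and f :: "bool \<Rightarrow> nat \<Rightarrow> real"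
  assumes continuous: "continuous_on UNIV \<Phi>"
    and positive: "\<And>x. \<Phi> x > 0"
    and weight_pos: "\<And>b k. f b k > 0"
    and summable_weight: "\<And>b. summable (f b)"
    and renewal: "\<And>b y. y \<in> cyl [\<not> b, b] \<Longrightarrow> (\<lambda>j. f b j * \<Phi> (excursion b j y)) sums \<Phi> y"
begin

abbreviation mass :: "bool \<Rightarrow> real" where
  "mass b \<equiv> suminf (f b)"

lemma renewal_le:
  assumes "y \<in> cyl [\<not> b, b]" "\<And>x. x \<in> cyl [b, \<not> b] \<Longrightarrow> \<Phi> x \<le> c"
  shows "\<Phi> y \<le> mass b * c"
  using assms weight_pos excursion_mem
  by (intro sums_weighted_le[OF _ summable_weight renewal]) (auto intro: less_imp_le)

lemma renewal_ge:
  assumes "y \<in> cyl [\<not> b, b]" "\<And>x. x \<in> cyl [b, \<not> b] \<Longrightarrow> c \<le> \<Phi> x"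
  shows "mass b * c \<le> \<Phi> y"
  using assms weight_pos excursion_mem
  by (intro sums_weighted_ge[OF _ summable_weight renewal]) (auto intro: less_imp_le)

lemma renewal_eq_bound:
  assumes "y \<in> cyl [\<not> b, b]" "\<And>x. x \<in> cyl [b, \<not> b] \<Longrightarrow> \<Phi> x \<le> c" "\<Phi> y = mass b * c"
  shows "\<Phi> (excursion b j y) = c"
proof (rule sums_weighted_eq_bound[OF weight_pos summable_weight])
  show "(\<lambda>j. f b j * \<Phi> (excursion b j y)) sums (mass b * c)"
    using renewal[OF assms(1)] assms(3) by simp
  show "\<Phi> (excursion b k y) \<le> c" for k
    using assms(2)[OF excursion_mem[OF assms(1)]] .
qed

lemma mass_pos: "mass b > 0"
  using suminf_pos[OF summable_weight weight_pos] .

lemma cyl_argmax: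
  obtains x where "x \<in> cyl w" "\<And>y. y \<in> cyl w \<Longrightarrow> \<Phi> y \<le> \<Phi> x"
  using continuous_attains_sup[OF compact_cyl cyl_nonempty continuous_on_subset[OF continuous]] by blast

lemma cyl_argmin:
  obtains x where "x \<in> cyl w" "\<And>y. y \<in> cyl w \<Longrightarrow> \<Phi> x \<le> \<Phi> y"
  using continuous_attains_inf[OF compact_cyl cyl_nonempty continuous_on_subset[OF continuous]] by blast

text \<open>Comparing the maxima, resp. the minima, of \<open>\<Phi>\<close> on \<open>[01]\<close> and \<open>[10]\<close>.\<close>
lemma mass_product: "mass True * mass False = 1"
proof (rule antisym)
  obtain x where x: "x \<in> cyl [False, True]" "\<And>x'. x' \<in> cyl [False, True] \<Longrightarrow> \<Phi> x' \<le> \<Phi> x"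
    using cyl_argmax[of "[False, True]"] by blast
  obtain y where y: "y \<in> cyl [True, False]" "\<And>y'. y' \<in> cyl [True, False] \<Longrightarrow> \<Phi> y' \<le> \<Phi> y"
    using cyl_argmax[of "[True, False]"] by blast
  have "\<Phi> x \<le> mass True * \<Phi> y"
    using renewal_le[of x True] x y by simp
  also have "\<dots> \<le> mass True * (mass False * \<Phi> x)"
    using renewal_le[of y False] x y mass_pos[of True] by (simp add: mult_left_mono)
  finally show "1 \<le> mass True * mass False"
    using positive[of x] by (simp add: mult.assoc[symmetric] mult_le_cancel_right1)
next
  obtain x where x: "x \<in> cyl [False, True]" "\<And>x'. x' \<in> cyl [False, True] \<Longrightarrow> \<Phi> x \<le> \<Phi> x'"
    using cyl_argmin[of "[False, True]"] by blast
  obtain y where y: "y \<in> cyl [True, False]" "\<And>y'. y' \<in> cyl [True, False] \<Longrightarrow> \<Phi> y \<le> \<Phi> y'"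
    using cyl_argmin[of "[True, False]"] by blast
  have "mass True * (mass False * \<Phi> x) \<le> mass True * \<Phi> y"
    using renewal_ge[of y False] x y mass_pos[of True] by (simp add: mult_left_mono)
  also have "\<dots> \<le> \<Phi> x"
    using renewal_ge[of x True] x y by simp
  finally show "mass True * mass False \<le> 1"
    using positive[of x] by (simp add: mult.assoc[symmetric] mult_le_cancel_right2)
qed

lemma max_balance:
  assumes xM: "xM \<in> cyl [False, True]" "\<And>x. x \<in> cyl [False, True] \<Longrightarrow> \<Phi> x \<le> \<Phi> xM"
    and yM: "yM \<in> cyl [True, False]" "\<And>y. y \<in> cyl [True, False] \<Longrightarrow> \<Phi> y \<le> \<Phi> yM"
  shows "\<Phi> xM = mass True * \<Phi> yM" "\<Phi> yM = mass False * \<Phi> xM"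
proof -
  have le1: "\<Phi> xM \<le> mass True * \<Phi> yM" and le2: "\<Phi> yM \<le> mass False * \<Phi> xM"
    using renewal_le[of xM True] renewal_le[of yM False] xM yM by simp_all
  have "mass True * \<Phi> yM \<le> mass True * (mass False * \<Phi> xM)"
    using le2 mass_pos[of True] by (simp add: mult_left_mono)
  with le1 mass_product show eq1: "\<Phi> xM = mass True * \<Phi> yM"
    by (simp add: mult.assoc[symmetric])
  show "\<Phi> yM = mass False * \<Phi> xM"
    using mass_product by (simp add: eq1 mult.assoc[symmetric] mult.commute[of "mass False"])
qed

text \<open>The maximisers of \<open>\<Phi>\<close> on \<open>[01]\<close> form a closed set which is stable under prepending
  words, so by density they exhaust \<open>[01]\<close>.\<close>
lemma constant_on_cyl_01:
  obtains c where "\<And>x. x \<in> cyl [False, True] \<Longrightarrow> \<Phi> x = c"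
proof -
  obtain xM where xM: "xM \<in> cyl [False, True]" "\<And>x. x \<in> cyl [False, True] \<Longrightarrow> \<Phi> x \<le> \<Phi> xM"
    using cyl_argmax[of "[False, True]"] by blast
  obtain yM where yM: "yM \<in> cyl [True, False]" "\<And>y. y \<in> cyl [True, False] \<Longrightarrow> \<Phi> y \<le> \<Phi> yM"
    using cyl_argmax[of "[True, False]"] by blast
  define P where "P = {x \<in> cyl [False, True]. \<Phi> x = \<Phi> xM}"
  define Q where "Q = {y \<in> cyl [True, False]. \<Phi> y = \<Phi> yM}"
  have PQ: "excursion True k x \<in> Q" if "x \<in> P" for x k
  proof -
    have x: "x \<in> cyl [False, True]" "\<Phi> x = mass True * \<Phi> yM"
      using that max_balance(1)[OF xM yM] by (simp_all add: P_def)
    then have "\<Phi> (excursion True k x) = \<Phi> yM"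
      using yM(2) by (intro renewal_eq_bound) simp_all
    with excursion_mem[of x True k] x(1) show ?thesis
      by (simp add: Q_def)
  qed
  have QP: "excursion False j y \<in> P" if "y \<in> Q" for y j
  proof -
    have y: "y \<in> cyl [True, False]" "\<Phi> y = mass False * \<Phi> xM"
      using that max_balance(2)[OF xM yM] by (simp_all add: Q_def)
    then have "\<Phi> (excursion False j y) = \<Phi> xM"
      using xM(2) by (intro renewal_eq_bound) simp_all
    with excursion_mem[of y False j] y(1) show ?thesis
      by (simp add: P_def)
  qed
  have "closed P"
    unfolding P_def Collect_conj_eq Collect_mem_eq
    using clopen_cyl(2) continuous by (intro closed_Int closed_Collect_eq continuous_on_const)
  moreover have "prepend w xM \<in> P" if "prepend w xM \<in> cyl [False, True]" for w
    using that PQ QP xM(1) by (intro prepend_mem_stable_pair[of P Q]) (auto simp: P_def Q_def)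
  ultimately have "P = cyl [False, True]"
    using xM(1) by (intro closed_prepend_stable_eq_cyl) (auto simp: P_def)
  then show ?thesis
    using that[of "\<Phi> xM"] unfolding P_def by blast
qed

lemma cyl_values:
  assumes "x \<in> cyl [False, True]" "y \<in> cyl [True, False]"
  shows "\<Phi> x = mass True * \<Phi> y" "\<Phi> y = mass False * \<Phi> x"
proof -
  obtain c where c: "\<And>x. x \<in> cyl [False, True] \<Longrightarrow> \<Phi> x = c"
    using constant_on_cyl_01 by blast
  have "(\<lambda>j. f False j * c) sums \<Phi> y"
    using renewal[of y False] assms(2) c excursion_mem[of y False] by simp
  then have "\<Phi> y = mass False * c"
    using sums_unique2 sums_mult2[OF summable_sums[OF summable_weight]] by metis
  with c[OF assms(1)] mass_product show "\<Phi> x = mass True * \<Phi> y" "\<Phi> y = mass False * \<Phi> x"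
    by (simp_all add: mult.assoc[symmetric])
qed

end

section \<open>Reduced double-well potentials\<close>

lemma eigenvalue_gt_1:
  assumes "reduced_double_well H H0 H1" "is_eigenfunction H \<beta> \<Phi> lam"
  shows "lam > 1"
proof -
  define x0 :: seq where "x0 = (\<lambda>_. False)"
  have "scons False x0 = x0"
    by (rule ext) (simp add: x0_def scons_def split: nat.split)
  moreover have "H x0 = 0"
    using assms(1) by (auto simp: reduced_double_well_def x0_def mem_cyl_iff nth_Cons')
  moreover have "transfer H \<beta> \<Phi> x0 = lam * \<Phi> x0"
    using assms(2) by (simp add: is_eigenfunction_def)
  ultimately have "lam * \<Phi> x0 = \<Phi> x0 + exp (- \<beta> * H (scons True x0)) * \<Phi> (scons True x0)"
    by (simp add: transfer_def)
  moreover have "\<Phi> (scons True x0) > 0" "\<Phi> x0 > 0"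
    using assms(2) by (simp_all add: is_eigenfunction_def)
  ultimately have "1 * \<Phi> x0 < lam * \<Phi> x0"
    by (simp add: add_pos_pos)
  with \<open>\<Phi> x0 > 0\<close> show ?thesis
    by (simp only: mult_less_cancel_right)
qed

lemma reduced_double_well_wells:
  assumes "reduced_double_well H H0 H1" "\<beta> > 0" "lam > 1"
  shows "well H H0 False \<beta> lam" "well H H1 True \<beta> lam"
proof -
  have "H x = 0" if "x \<in> cyl [c, c]" for c x
    using assms(1) that by (cases c) (auto simp: reduced_double_well_def)
  then show "well H H0 False \<beta> lam" "well H H1 True \<beta> lam"
    using assms by (unfold_locales; auto simp: reduced_double_well_def)+
qed

theorem corollary3p5:
  fixes H :: "seq \<Rightarrow> real" and H0 H1 :: "nat \<Rightarrow> real" and \<beta> lam :: real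
    and \<Phi> :: "seq \<Rightarrow> real" and \<nu> :: "seq measure"
  assumes "reduced_double_well H H0 H1"
    and "\<beta> > 0"
    and "is_eigenfunction H \<beta> \<Phi> lam"
    and "is_eigenmeasure H \<beta> \<nu> lam"
  shows "(summable (Fterm H0 \<beta> lam) \<and> summable (Fterm H1 \<beta> lam) \<and>
         F H0 \<beta> lam * F H1 \<beta> lam = 1) \<and>
         (\<forall>x \<in> cyl [False, True]. \<forall>y \<in> cyl [True, False].
           \<Phi> x = F H1 \<beta> lam * \<Phi> y \<and> \<Phi> y = F H0 \<beta> lam * \<Phi> x) \<and>
         (measure \<nu> (cyl [False, True]) = F H0 \<beta> lam * measure \<nu> (cyl [True, False]) \<and>
         measure \<nu> (cyl [True, False]) = F H1 \<beta> lam * measure \<nu> (cyl [False, True]))"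
proof -
  have "lam > 1"
    using assms(1,3) by (rule eigenvalue_gt_1)
  with assms(1,2) have wells: "well H H0 False \<beta> lam" "well H H1 True \<beta> lam"
    by (rule reduced_double_well_wells)+
  interpret E0: well_eigenfunction H H0 False \<beta> lam \<Phi>
    using wells(1) assms(3) by (simp add: well_eigenfunction_def well_eigenfunction_axioms_def is_eigenfunction_def)
  interpret E1: well_eigenfunction H H1 True \<beta> lam \<Phi>
    using wells(2) assms(3) by (simp add: well_eigenfunction_def well_eigenfunction_axioms_def is_eigenfunction_def)
  interpret M0: well_eigenmeasure H H0 False \<beta> lam \<nu>
    using wells(1) assms(4) by (simp add: well_eigenmeasure_def well_eigenmeasure_axioms_def is_eigenmeasure_def)
  interpret M1: well_eigenmeasure H H1 True \<beta> lam \<nu>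
    using wells(2) assms(4) by (simp add: well_eigenmeasure_def well_eigenmeasure_axioms_def is_eigenmeasure_def)
  interpret R: renewal_pair \<Phi> "\<lambda>b. if b then Fterm H1 \<beta> lam else Fterm H0 \<beta> lam"
    using assms(3) E0.Fterm_pos E1.Fterm_pos E0.summable_Fterm E1.summable_Fterm
      E0.sums_excursions E1.sums_excursions
    by unfold_locales (auto simp: is_eigenfunction_def)
  show ?thesis
    using R.mass_product R.cyl_values M0.measure_balance M1.measure_balance
      E0.summable_Fterm E1.summable_Fterm
    by (auto simp: F_def mult.commute)
qed

end
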